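(* For all matches $(p,\sigma)$, $(q,\rho)$ with $p,\sigma\sqsubseteq q,\rho$: for every pattern $r$ and substitution $\theta$ such that $\{r\,\|\,p\}=(\theta,\sigma)$, it holds that $\{r\,\|\,q\}=(\theta,\rho)$.
   Context: CPC patterns over a countable set of names: $p ::= \lambda x \mid x \mid \ulcorner x\urcorner \mid p\bullet p$ (binding name, variable name, protected name, compound). ${\sf bn}(p)$, ${\sf vn}(p)$, ${\sf pn}(p)$ are the sets of binding, variable and protected names of $p$; ${\sf fn}(p)={\sf vn}(p)\cup{\sf pn}(p)$. Patterns are well formed (binding names pairwise distinct and distinct from free names). Communicable patterns contain no protected or binding names. A substitution is a finite partial function from names to communicable patterns; $\hat\sigma$ acts on patterns by $\hat\sigma x=x$, $\hat\sigma\ulcorner x\urcorner=\ulcorner x\urcorner$, $\hat\sigma(\lambda x)=\sigma(x)$ if $x\in{\sf dom}(\sigma)$ else $\lambda x$, $\hat\sigma(p\bullet q)=\hat\sigma p\bullet\hat\sigma q$. Unification $\{p\,\|\,q\}$ is a pair of substitutions or undefined: $\{x\|x\}=\{x\|\ulcorner x\urcorner\}=\{\ulcorner x\urcorner\|x\}=\{\ulcorner x\urcorner\|\ulcorner x\urcorner\}=(\{\},\{\})$; $\{\lambda x\|q\}=(\{q/x\},\{\})$ if $q$ is communicable; $\{p\|\lambda x\}=(\{\},\{p/x\})$ if $p$ is communicable; $\{p_1\bullet p_2\|q_1\bullet q_2\}=(\sigma_1\cup\sigma_2,\rho_1\cup\rho_2)$ if $\{p_i\|q_i\}=(\sigma_i,\rho_i)$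 for $i=1,2$; undefined otherwise. A match $(p,\sigma)$ is a pattern $p$ and substitution $\sigma$ with ${\sf dom}(\sigma)={\sf bn}(p)$. Compatibility $p,\sigma\sqsubseteq q,\rho$ is the least relation between matches with: $p,\sigma\sqsubseteq\lambda y,\{\hat\sigma p/y\}$ if ${\sf fn}(p)=\emptyset$; $n,\{\}\sqsubseteq n,\{\}$; $\ulcorner n\urcorner,\{\}\sqsubseteq\ulcorner n\urcorner,\{\}$; $\ulcorner n\urcorner,\{\}\sqsubseteq n,\{\}$; $p_1\bullet p_2,\sigma_1\cup\sigma_2\sqsubseteq q_1\bullet q_2,\rho_1\cup\rho_2$ if $p_i,\sigma_i\sqsubseteq q_i,\rho_i$ for $i=1,2$. *)

theory Defs
  imports Main
begin

datatype 'n pat =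
    Bind 'n
  | Var 'n
  | Prot 'n
  | Comp "'n pat" "'n pat"

fun bnl :: "'n pat \<Rightarrow> 'n list" where
  "bnl (Bind x) = [x]"
| "bnl (Var x) = []"
| "bnl (Prot x) = []"
| "bnl (Comp p q) = bnl p @ bnl q"

definition bn :: "'n pat \<Rightarrow> 'n set" where
  "bn p = set (bnl p)"

fun vn :: "'n pat \<Rightarrow> 'n set" where
  "vn (Bind x) = {}"
| "vn (Var x) = {x}"
| "vn (Prot x) = {}"
| "vn (Comp p q) = vn p \<union> vn q"

fun pn :: "'n pat \<Rightarrow> 'n set" where
  "pn (Bind x) = {}"
| "pn (Var x) = {}"
| "pn (Prot x) = {x}"
| "pn (Comp p q) = pn p \<union> pn q"

definition fn :: "'n pat \<Rightarrow> 'n set" where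
  "fn p = vn p \<union> pn p"

definition wf_pat :: "'n pat \<Rightarrow> bool" where
  "wf_pat p \<longleftrightarrow> distinct (bnl p) \<and> bn p \<inter> fn p = {}"

definition communicable :: "'n pat \<Rightarrow> bool" where
  "communicable p \<longleftrightarrow> pn p = {} \<and> bn p = {}"

type_synonym 'n subst = "'n \<rightharpoonup> 'n pat"

definition is_subst :: "'n subst \<Rightarrow> bool" where
  "is_subst \<sigma> \<longleftrightarrow> finite (dom \<sigma>) \<and> (\<forall>p\<in>ran \<sigma>. communicable p)"

definition sunion :: "'n subst \<Rightarrow> 'n subst \<Rightarrow> 'n subst option" where
  "sunion \<sigma>1 \<sigma>2 = (if \<forall>x\<in>dom \<sigma>1 \<inter> dom \<sigma>2. \<sigma>1 x = \<sigma>2 x then Some (\<sigma>1 ++ \<sigma>2) else None)"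

fun app_subst :: "'n subst \<Rightarrow> 'n pat \<Rightarrow> 'n pat" where
  "app_subst \<sigma> (Var x) = Var x"
| "app_subst \<sigma> (Prot x) = Prot x"
| "app_subst \<sigma> (Bind x) = (case \<sigma> x of Some p \<Rightarrow> p | None \<Rightarrow> Bind x)"
| "app_subst \<sigma> (Comp p q) = Comp (app_subst \<sigma> p) (app_subst \<sigma> q)"

fun unify :: "'n pat \<Rightarrow> 'n pat \<Rightarrow> ('n subst \<times> 'n subst) option" where
  "unify (Bind x) q = (if communicable q then Some ([x \<mapsto> q], Map.empty) else None)"
| "unify p (Bind y) = (if communicable p then Some (Map.empty, [y \<mapsto> p]) else None)"
| "unify (Var x) (Var y) = (if x = y then Some (Map.empty, Map.empty) else None)"
| "unify (Var x) (Prot y) = (if x = y then Some (Map.empty, Map.empty) else None)"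
| "unify (Prot x) (Var y) = (if x = y then Some (Map.empty, Map.empty) else None)"
| "unify (Prot x) (Prot y) = (if x = y then Some (Map.empty, Map.empty) else None)"
| "unify (Comp p1 p2) (Comp q1 q2) =
     (case (unify p1 q1, unify p2 q2) of
        (Some (\<sigma>1, \<rho>1), Some (\<sigma>2, \<rho>2)) \<Rightarrow>
          (case (sunion \<sigma>1 \<sigma>2, sunion \<rho>1 \<rho>2) of
             (Some \<sigma>, Some \<rho>) \<Rightarrow> Some (\<sigma>, \<rho>)
           | _ \<Rightarrow> None)
      | _ \<Rightarrow> None)"
| "unify _ _ = None"

definition is_match :: "'n pat \<Rightarrow> 'n subst \<Rightarrow> bool" where
  "is_match p \<sigma> \<longleftrightarrow> wf_pat p \<and> is_subst \<sigma> \<and> dom \<sigma> = bn p"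

inductive compat :: "'n pat \<Rightarrow> 'n subst \<Rightarrow> 'n pat \<Rightarrow> 'n subst \<Rightarrow> bool" where
  cbind: "is_match p \<sigma> \<Longrightarrow> fn p = {} \<Longrightarrow> compat p \<sigma> (Bind y) [y \<mapsto> app_subst \<sigma> p]"
| cvar: "compat (Var n) Map.empty (Var n) Map.empty"
| cprot: "compat (Prot n) Map.empty (Prot n) Map.empty"
| cprotvar: "compat (Prot n) Map.empty (Var n) Map.empty"
| ccomp: "compat p1 \<sigma>1 q1 \<rho>1 \<Longrightarrow> compat p2 \<sigma>2 q2 \<rho>2 \<Longrightarrow>
          sunion \<sigma>1 \<sigma>2 = Some \<sigma> \<Longrightarrow> sunion \<rho>1 \<rho>2 = Some \<rho> \<Longrightarrow>
          is_match (Comp p1 p2) \<sigma> \<Longrightarrow> is_match (Comp q1 q2) \<rho> \<Longrightarrow>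
          compat (Comp p1 p2) \<sigma> (Comp q1 q2) \<rho>"

end

theory Submission
  imports Defs
begin

text \<open>
  In the compound case the substitution
  that \<open>r\<close> induces on each component of \<open>p\<close> lies below \<open>\<sigma>\<close> and has the binding names
  of that component as domain, so it is the component substitution of the compatibility
  derivation and the induction hypotheses apply. In the binding case \<open>p\<close> has no free names,
  hence is not communicable; so \<open>r\<close> is not a binding name, and unifying \<open>r\<close> with \<open>p\<close> forces
  \<open>r = app_subst \<sigma> p\<close> with \<open>r\<close> communicable, which is exactly what \<open>unify r (Bind y)\<close> needs.
  A binding name \<open>r\<close> against a compound \<open>p\<close> is handled by the fact that a communicable
  pattern is only compatible with itself.
\<close>

lemma bn_Comp [simp]: "bn (Comp p q) = bn p \<union> bn q"
  by (simp add: bn_def)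

lemma bn_Un_fn_nonempty: "bn p \<union> fn p \<noteq> {}"
  by (induction p) (auto simp: bn_def fn_def)

lemma not_communicable_if_fn_empty: "fn p = {} \<Longrightarrow> \<not> communicable p"
  using bn_Un_fn_nonempty[of p] by (auto simp: communicable_def fn_def)

lemma communicable_Comp_iff: "communicable (Comp p q) \<longleftrightarrow> communicable p \<and> communicable q"
  by (auto simp: communicable_def)

lemma unify_Comp_Some_iff:
  "unify (Comp r1 r2) (Comp p1 p2) = Some (\<theta>, \<sigma>) \<longleftrightarrow>
   (\<exists>\<theta>1 \<sigma>1 \<theta>2 \<sigma>2. unify r1 p1 = Some (\<theta>1, \<sigma>1) \<and> unify r2 p2 = Some (\<theta>2, \<sigma>2)
     \<and> sunion \<theta>1 \<theta>2 = Some \<theta> \<and> sunion \<sigma>1 \<sigma>2 = Some \<sigma>)"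
  by (auto split: option.splits prod.splits)

lemma sunion_SomeD:
  assumes "sunion a b = Some c"
  shows "c = a ++ b" and "\<forall>x\<in>dom a \<inter> dom b. a x = b x"
  using assms by (auto simp: sunion_def split: if_splits)

lemma map_le_sunion:
  assumes "sunion a b = Some c"
  shows "a \<subseteq>\<^sub>m c" and "b \<subseteq>\<^sub>m c"
proof -
  note c = sunion_SomeD[OF assms]
  show "a \<subseteq>\<^sub>m c"
    unfolding map_le_def c(1)
  proof
    fix x assume "x \<in> dom a"
    with c(2) show "a x = (a ++ b) x"
      by (cases "x \<in> dom b") (auto simp: map_add_dom_app_simps)
  qed
  show "b \<subseteq>\<^sub>m c"
    unfolding c(1) by (rule map_le_map_add)
qed

lemma dom_sunion: "sunion a b = Some c \<Longrightarrow> dom c = dom a \<union> dom b"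
  by (drule sunion_SomeD(1)) auto

lemma map_le_common_eq:
  assumes "a \<subseteq>\<^sub>m c" and "b \<subseteq>\<^sub>m c" and "dom a = dom b"
  shows "a = b"
proof
  fix x show "a x = b x"
    using assms unfolding map_le_def by (metis domIff)
qed

lemma app_subst_map_le: "a \<subseteq>\<^sub>m c \<Longrightarrow> bn p \<subseteq> dom a \<Longrightarrow> app_subst c p = app_subst a p"
  by (induction p) (auto simp: bn_def map_le_def)

lemma dom_unify: "unify r p = Some (\<theta>, \<sigma>) \<Longrightarrow> dom \<theta> = bn r \<and> dom \<sigma> = bn p"
proof (induction r p arbitrary: \<theta> \<sigma> rule: unify.induct)
  case (7 r1 r2 p1 p2)
  then obtain \<theta>1 \<sigma>1 \<theta>2 \<sigma>2 where
      u: "unify r1 p1 = Some (\<theta>1, \<sigma>1)" "unify r2 p2 = Some (\<theta>2, \<sigma>2)"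
         "sunion \<theta>1 \<theta>2 = Some \<theta>" "sunion \<sigma>1 \<sigma>2 = Some \<sigma>"
    unfolding unify_Comp_Some_iff by blast
  show ?case
    using "7.IH"(1)[OF u(1)] "7.IH"(2)[OF u(2)] dom_sunion[OF u(3)] dom_sunion[OF u(4)] by simp
qed (auto simp: bn_def communicable_def split: if_splits)

lemma dom_compat: "compat p \<sigma> q \<rho> \<Longrightarrow> dom \<sigma> = bn p \<and> dom \<rho> = bn q"
  by (induction rule: compat.induct) (auto simp: is_match_def bn_def split: if_splits)

lemma unify_closed_pattern:
  "fn p = {} \<Longrightarrow> unify r p = Some (\<theta>, \<sigma>) \<Longrightarrow>
   communicable r \<and> \<theta> = Map.empty \<and> app_subst \<sigma> p = r"
proof (induction p arbitrary: r \<theta> \<sigma>)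
  case (Bind y)
  then show ?case
    by (cases r) (auto simp: communicable_def bn_def split: if_splits)
next
  case (Comp p1 p2)
  have fn_p: "fn p1 = {}" "fn p2 = {}"
    using Comp.prems(1) by (auto simp: fn_def)
  show ?case
  proof (cases r)
    case (Bind x)
    then show ?thesis
      using Comp.prems not_communicable_if_fn_empty by (auto split: if_splits)
  next
    case (Comp r1 r2)
    with Comp.prems(2) have "unify (Comp r1 r2) (Comp p1 p2) = Some (\<theta>, \<sigma>)"
      by simp
    then obtain \<theta>1 \<sigma>1 \<theta>2 \<sigma>2 where
        u: "unify r1 p1 = Some (\<theta>1, \<sigma>1)" "unify r2 p2 = Some (\<theta>2, \<sigma>2)"
           "sunion \<theta>1 \<theta>2 = Some \<theta>" "sunion \<sigma>1 \<sigma>2 = Some \<sigma>"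
      unfolding unify_Comp_Some_iff by blast
    note IH1 = Comp.IH(1)[OF fn_p(1) u(1)] and IH2 = Comp.IH(2)[OF fn_p(2) u(2)]
    have "app_subst \<sigma> p1 = r1" "app_subst \<sigma> p2 = r2"
      using app_subst_map_le[OF map_le_sunion(1)[OF u(4)]] dom_unify[OF u(1)]
        app_subst_map_le[OF map_le_sunion(2)[OF u(4)]] dom_unify[OF u(2)] IH1 IH2 by auto
    moreover have "\<theta> = Map.empty"
      using u(3) IH1 IH2 by (simp add: sunion_def)
    ultimately show ?thesis
      using Comp IH1 IH2 by (simp add: communicable_Comp_iff)
  qed (use Comp.prems in auto)
qed (auto simp: fn_def)

lemma compat_communicable: "compat p \<sigma> q \<rho> \<Longrightarrow> communicable p \<Longrightarrow> q = p \<and> \<rho> = Map.empty"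
proof (induction rule: compat.induct)
  case (cbind p \<sigma> y)
  then show ?case using not_communicable_if_fn_empty by blast
next
  case (ccomp p1 \<sigma>1 q1 \<rho>1 p2 \<sigma>2 q2 \<rho>2 \<sigma> \<rho>)
  then show ?case by (auto simp: communicable_Comp_iff sunion_def)
qed (auto simp: communicable_def)

lemma compat_unify:
  "compat p \<sigma> q \<rho> \<Longrightarrow> unify r p = Some (\<theta>, \<sigma>) \<Longrightarrow> unify r q = Some (\<theta>, \<rho>)"
proof (induction arbitrary: r \<theta> rule: compat.induct)
  case (cbind p \<sigma> y)
  have r: "communicable r" "\<theta> = Map.empty" "app_subst \<sigma> p = r"
    using unify_closed_pattern[OF cbind.hyps(2) cbind.prems] by auto
  have "\<not> communicable p"
    using not_communicable_if_fn_empty cbind.hyps(2) by blast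
  then have "\<forall>x. r \<noteq> Bind x"
    using cbind.prems by (auto split: if_splits)
  then show ?case
    using r by (cases r) auto
next
  case (cprotvar n)
  then show ?case by (cases r) (auto simp: communicable_def split: if_splits)
next
  case (ccomp p1 \<sigma>1 q1 \<rho>1 p2 \<sigma>2 q2 \<rho>2 \<sigma> \<rho>)
  show ?case
  proof (cases r)
    case (Bind x)
    then have "communicable (Comp p1 p2)" "\<sigma> = Map.empty"
      using ccomp.prems by (auto split: if_splits)
    moreover have "compat (Comp p1 p2) \<sigma> (Comp q1 q2) \<rho>"
      using ccomp.hyps by (blast intro: compat.ccomp)
    ultimately have "Comp q1 q2 = Comp p1 p2" "\<rho> = Map.empty"
      using compat_communicable by blast+
    then show ?thesis
      using ccomp.prems Bind by (auto split: if_splits)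
  next
    case (Comp r1 r2)
    with ccomp.prems have "unify (Comp r1 r2) (Comp p1 p2) = Some (\<theta>, \<sigma>)"
      by simp
    then obtain \<theta>1 \<sigma>1' \<theta>2 \<sigma>2' where
        u: "unify r1 p1 = Some (\<theta>1, \<sigma>1')" "unify r2 p2 = Some (\<theta>2, \<sigma>2')"
           "sunion \<theta>1 \<theta>2 = Some \<theta>" "sunion \<sigma>1' \<sigma>2' = Some \<sigma>"
      unfolding unify_Comp_Some_iff by blast
    have "\<sigma>1' = \<sigma>1" "\<sigma>2' = \<sigma>2"
      using map_le_common_eq map_le_sunion[OF u(4)] map_le_sunion[OF ccomp.hyps(3)]
        dom_unify[OF u(1)] dom_unify[OF u(2)] dom_compat[OF ccomp.hyps(1)]
        dom_compat[OF ccomp.hyps(2)] by metis+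
    then have "unify r1 q1 = Some (\<theta>1, \<rho>1)" "unify r2 q2 = Some (\<theta>2, \<rho>2)"
      using ccomp.IH u by auto
    then show ?thesis
      using Comp u(3) ccomp.hyps(4) unify_Comp_Some_iff by blast
  qed (use ccomp.prems in auto)
qed auto

theorem proposition3p20:
  fixes p q r :: "'n pat" and \<sigma> \<rho> \<theta> :: "'n subst"
  assumes "is_match p \<sigma>" and "is_match q \<rho>"
    and "compat p \<sigma> q \<rho>"
    and "wf_pat r" and "is_subst \<theta>"
    and "unify r p = Some (\<theta>, \<sigma>)"
  shows "unify r q = Some (\<theta>, \<rho>)"
  using compat_unify assms(3,6) .

end
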